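(* Let $T:\mathcal{M}_k\to\mathcal{M}_k$ be a completely positive map that is self-adjoint with respect to the trace inner product. Then $T$ is completely reducible if and only if for every orthogonal projection $W\in\mathcal{M}_k$ with $T(W\mathcal{M}_kW)\subseteq W\mathcal{M}_kW$ we have $T|_{W\mathcal{M}_kW^\perp+W^\perp\mathcal{M}_kW}\equiv0$.
   Context: $\mathcal{M}_k$ denotes the complex $k\times k$ matrices. For an orthogonal projection $W$, $W^\perp=\mathrm{Id}-W$; for orthogonal projections $V,W$, $V\mathcal{M}_kW=\{VXW:X\in\mathcal{M}_k\}$. A linear map $T:\mathcal{M}_k\to\mathcal{M}_k$ is completely positive if $T(X)=\sum_iR_iXR_i^*$ for some $R_i\in\mathcal{M}_k$; it is positive if it maps positive semidefinite matrices to positive semidefinite matrices, and self-adjoint if self-adjoint with respect to $\langle X,Y\rangle=\mathrm{tr}(XY^* )$. Given an orthogonal projection $V$ and a positive map $T:V\mathcal{M}_kV\to V\mathcal{M}_kV$, $T$ is irreducible if the only orthogonal projections $W$ with $W\mathcal{M}_kW\subseteq V\mathcal{M}_kV$ and $T(W\mathcal{M}_kW)\subseteq W\mathcal{M}_kW$ are $W=0$ and $W=V$. A self-adjoint positive map $T:\mathcal{M}_k\to\mathcal{M}_k$ is completely reducible if there are orthogonal projections $W_1,\dots,W_l$ with $W_iW_j=0$ for $i\ne j$, $T(W_i\mathcal{M}_kW_i)\subseteq W_i\mathcal{M}_kW_i$ and $T|_{W_i\mathcal{M}_kW_i}$ irreducible for every $i$, and $T|_R\equiv0$, where $R$ is the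 orthogonal complement (trace inner product) of $\bigoplus_iW_i\mathcal{M}_kW_i$ in $\mathcal{M}_k$. *)

theory Defs
  imports "HOL-Analysis.Analysis"
begin

text \<open>Complex k x k matrices are modelled as complex^'n^'n with k = CARD('n).\<close>

type_synonym 'n cmat = "complex^'n^'n"

definition cadj :: "'n::finite cmat \<Rightarrow> 'n cmat" where
  "cadj A = (\<chi> i j. cnj (A $ j $ i))"

definition tr_inner :: "'n::finite cmat \<Rightarrow> 'n cmat \<Rightarrow> complex" where
  "tr_inner X Y = trace (X ** cadj Y)"

definition orth_proj :: "'n::finite cmat \<Rightarrow> bool" where
  "orth_proj W \<longleftrightarrow> W ** W = W \<and> cadj W = W"

definition perp :: "'n::finite cmat \<Rightarrow> 'n cmat" where
  "perp W = mat 1 - W"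

definition corner :: "'n::finite cmat \<Rightarrow> 'n cmat \<Rightarrow> 'n cmat set" where
  "corner V W = {V ** X ** W | X. True}"

definition completely_positive :: "('n::finite cmat \<Rightarrow> 'n cmat) \<Rightarrow> bool" where
  "completely_positive T \<longleftrightarrow>
     (\<exists>Rs :: 'n cmat list. \<forall>X. T X = (\<Sum>R\<leftarrow>Rs. R ** X ** cadj R))"

definition trace_self_adjoint :: "('n::finite cmat \<Rightarrow> 'n cmat) \<Rightarrow> bool" where
  "trace_self_adjoint T \<longleftrightarrow> (\<forall>X Y. tr_inner (T X) Y = tr_inner X (T Y))"

definition irreducible_on :: "('n::finite cmat \<Rightarrow> 'n cmat) \<Rightarrow> 'n cmat \<Rightarrow> bool" where
  "irreducible_on T V \<longleftrightarrow>
     (\<forall>W. orth_proj W \<and> corner W W \<subseteq> corner V V \<and> T ` corner W W \<subseteq> corner W W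
          \<longrightarrow> W = 0 \<or> W = V)"

definition corner_sum :: "'n::finite cmat list \<Rightarrow> 'n cmat set" where
  "corner_sum Ws = {X. \<exists>Xs. length Xs = length Ws \<and>
      (\<forall>i<length Ws. Xs ! i \<in> corner (Ws ! i) (Ws ! i)) \<and> X = sum_list Xs}"

definition orth_compl :: "'n::finite cmat set \<Rightarrow> 'n cmat set" where
  "orth_compl S = {X. \<forall>Y\<in>S. tr_inner X Y = 0}"

definition completely_reducible :: "('n::finite cmat \<Rightarrow> 'n cmat) \<Rightarrow> bool" where
  "completely_reducible T \<longleftrightarrow>
     (\<exists>Ws :: 'n cmat list.
        (\<forall>i<length Ws. orth_proj (Ws ! i)) \<and>
        (\<forall>i<length Ws. \<forall>j<length Ws. i \<noteq> j \<longrightarrow> Ws ! i ** Ws ! j = 0) \<and>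
        (\<forall>i<length Ws. T ` corner (Ws ! i) (Ws ! i) \<subseteq> corner (Ws ! i) (Ws ! i)) \<and>
        (\<forall>i<length Ws. irreducible_on T (Ws ! i)) \<and>
        (\<forall>X\<in>orth_compl (corner_sum Ws). T X = 0))"

end

theory Submission
  imports Defs
begin

text \<open>Write T X = \<Sum> R X R* in Kraus form. Positivity of such sums, together with the
  self-adjointness of T, shows that a corner W M W is T-invariant exactly when W commutes with
  every Kraus operator R and with R*; for such projections T (A X B) = A T(X) B.

  If T is completely reducible with blocks W_i, then T X = \<Sum> W_i T(X) W_i, and each block
  W_i (W Y perp W) W_i vanishes: by irreducibility the range of W_i lies in that of W or of
  perp W, or meets both trivially, and in the last case T vanishes on all of W_i M W_i.

  Conversely, splitting off invariant projections of minimal rank decomposes the identity into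
  orthogonal irreducible invariant projections W_i. A matrix orthogonal to every W_i M W_i has
  vanishing diagonal blocks, and its off-diagonal blocks W_i X W_j = W_i (X W_j) perp W_i are
  killed by the hypothesis.\<close>

lemma matrix_add_rdistrib:
  fixes A B :: "'a::semiring_1^'n^'m" and C :: "'a^'p^'n"
  shows "(A + B) ** C = A ** C + B ** C"
  by (simp add: matrix_matrix_mult_def vec_eq_iff distrib_right sum.distrib)

lemma matrix_diff_ldistrib:
  fixes A :: "'a::ring_1^'n^'m" and B C :: "'a^'p^'n"
  shows "A ** (B - C) = A ** B - A ** C"
  by (simp add: matrix_matrix_mult_def vec_eq_iff right_diff_distrib sum_subtractf)

lemma matrix_diff_rdistrib:
  fixes A B :: "'a::ring_1^'n^'m" and C :: "'a^'p^'n"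
  shows "(A - B) ** C = A ** C - B ** C"
  by (simp add: matrix_matrix_mult_def vec_eq_iff left_diff_distrib sum_subtractf)

lemma matrix_sum_ldistrib:
  fixes A :: "'a::semiring_1^'n^'m" and f :: "'i \<Rightarrow> 'a^'p^'n"
  shows "A ** (\<Sum>i\<in>S. f i) = (\<Sum>i\<in>S. A ** f i)"
  by (induction S rule: infinite_finite_induct) (auto simp: matrix_add_ldistrib)

lemma matrix_sum_rdistrib:
  fixes f :: "'i \<Rightarrow> 'a::semiring_1^'n^'m" and A :: "'a^'p^'n"
  shows "(\<Sum>i\<in>S. f i) ** A = (\<Sum>i\<in>S. f i ** A)"
  by (induction S rule: infinite_finite_induct) (auto simp: matrix_add_rdistrib)

lemma matrix_sum_list_ldistrib:
  fixes A :: "'a::semiring_1^'n^'m" and f :: "'i \<Rightarrow> 'a^'p^'n"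
  shows "A ** (\<Sum>x\<leftarrow>xs. f x) = (\<Sum>x\<leftarrow>xs. A ** f x)"
  by (induction xs) (auto simp: matrix_add_ldistrib)

lemma matrix_sum_list_rdistrib:
  fixes f :: "'i \<Rightarrow> 'a::semiring_1^'n^'m" and A :: "'a^'p^'n"
  shows "(\<Sum>x\<leftarrow>xs. f x) ** A = (\<Sum>x\<leftarrow>xs. f x ** A)"
  by (induction xs) (auto simp: matrix_add_rdistrib)

lemma trace_zero [simp]: "trace (0::'a::semiring_1^'n^'n) = 0"
  by (simp add: trace_def)

lemma cadj_cadj [simp]: "cadj (cadj A) = A"
  by (simp add: cadj_def vec_eq_iff)

lemma cadj_mult: "cadj (A ** B) = cadj B ** cadj A"
  by (simp add: cadj_def vec_eq_iff matrix_matrix_mult_def mult.commute)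

lemma cadj_add [simp]: "cadj (A + B) = cadj A + cadj B"
  by (simp add: cadj_def vec_eq_iff)

lemma cadj_diff [simp]: "cadj (A - B) = cadj A - cadj B"
  by (simp add: cadj_def vec_eq_iff)

lemma cadj_0 [simp]: "cadj 0 = 0"
  by (simp add: cadj_def vec_eq_iff)

lemma cadj_1 [simp]: "cadj (mat 1) = mat 1"
  by (simp add: cadj_def vec_eq_iff mat_def)

lemma trace_mult_cadj: "trace (A ** cadj A) = complex_of_real ((norm A)\<^sup>2)"
proof -
  have "trace (A ** cadj A) = (\<Sum>i\<in>UNIV. \<Sum>j\<in>UNIV. A$i$j * cnj (A$i$j))"
    by (simp add: trace_def matrix_matrix_mult_def cadj_def)
  also have "\<dots> = (\<Sum>i\<in>UNIV. \<Sum>j\<in>UNIV. complex_of_real ((cmod (A$i$j))\<^sup>2))"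
    by (simp only: complex_norm_square)
  also have "\<dots> = complex_of_real ((norm A)\<^sup>2)"
    by (simp add: norm_vec_def L2_set_def sum_nonneg)
  finally show ?thesis .
qed

lemma trace_mult_cadj_eq_0_iff: "trace (A ** cadj A) = 0 \<longleftrightarrow> A = 0"
  by (simp add: trace_mult_cadj)

lemma sum_list_mult_cadj_eq_0D:
  assumes "(\<Sum>x\<leftarrow>xs. f x ** cadj (f x)) = 0" and "x \<in> set xs"
  shows "f x = 0"
proof -
  have "trace (\<Sum>x\<leftarrow>xs. f x ** cadj (f x)) = complex_of_real (\<Sum>x\<leftarrow>xs. (norm (f x))\<^sup>2)"
    by (induction xs) (auto simp: trace_add trace_mult_cadj)
  then have "complex_of_real (\<Sum>x\<leftarrow>xs. (norm (f x))\<^sup>2) = 0"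
    using assms(1) by simp
  then have "(\<Sum>x\<leftarrow>xs. (norm (f x))\<^sup>2) = 0" by (simp only: of_real_eq_0_iff)
  with assms(2) show ?thesis by (subst (asm) sum_list_nonneg_eq_0_iff) auto
qed

lemma tr_inner_0_left [simp]: "tr_inner 0 Y = 0"
  and tr_inner_0_right [simp]: "tr_inner X 0 = 0"
  by (simp_all add: tr_inner_def)

lemma tr_inner_add_right: "tr_inner X (Y + Z) = tr_inner X Y + tr_inner X Z"
  by (simp add: tr_inner_def matrix_add_ldistrib trace_add)

lemma tr_inner_sum_list_right: "tr_inner X (sum_list Ys) = (\<Sum>Y\<leftarrow>Ys. tr_inner X Y)"
  by (induction Ys) (simp_all add: tr_inner_add_right)

section \<open>Orthogonal projections and corners\<close>

lemma orth_proj_idem: "orth_proj W \<Longrightarrow> W ** W = W"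
  and orth_proj_cadj: "orth_proj W \<Longrightarrow> cadj W = W"
  by (simp_all add: orth_proj_def)

lemma mult_orth_proj_idem: "orth_proj W \<Longrightarrow> X ** W ** W = X ** W"
  by (metis orth_proj_idem matrix_mul_assoc)

lemma perp_perp [simp]: "perp (perp W) = W"
  by (simp add: perp_def)

lemma add_perp: "W + perp W = mat 1"
  by (simp add: perp_def)

lemma orth_proj_perp: "orth_proj W \<Longrightarrow> orth_proj (perp W)"
  by (simp add: orth_proj_def perp_def matrix_diff_ldistrib matrix_diff_rdistrib)

lemma mult_perp_right: "orth_proj W \<Longrightarrow> W ** perp W = 0"
  and mult_perp_left: "orth_proj W \<Longrightarrow> perp W ** W = 0"
  by (simp_all add: orth_proj_def perp_def matrix_diff_ldistrib matrix_diff_rdistrib)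

lemma orth_proj_mult_commute:
  assumes "orth_proj V" "orth_proj W" "V ** W = W"
  shows "W ** V = W"
  using arg_cong[OF assms(3), of cadj] assms(1,2) by (simp add: cadj_mult orth_proj_cadj)

lemma self_in_corner:
  assumes "orth_proj W"
  shows "W \<in> corner W W"
proof -
  have "W = W ** mat 1 ** W" using orth_proj_idem[OF assms] by simp
  then show ?thesis unfolding corner_def by blast
qed

lemma corner_sandwich:
  assumes W: "orth_proj W" and Y: "Y \<in> corner W W"
  shows "W ** Y ** W = Y"
proof -
  obtain X where "Y = W ** X ** W" using Y unfolding corner_def by blast
  then show ?thesis by (simp add: matrix_mul_assoc orth_proj_idem[OF W] mult_orth_proj_idem[OF W])
qed



lemma corner_subset_iff:
  assumes V: "orth_proj V" and W: "orth_proj W"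
  shows "corner W W \<subseteq> corner V V \<longleftrightarrow> V ** W = W"
proof
  assume "corner W W \<subseteq> corner V V"
  with self_in_corner[OF W] obtain X where "W = V ** X ** V" unfolding corner_def by auto
  then show "V ** W = W" using orth_proj_idem[OF V] by (simp add: matrix_mul_assoc)
next
  assume VW: "V ** W = W"
  then have WV: "W ** V = W" by (rule orth_proj_mult_commute[OF V W])
  show "corner W W \<subseteq> corner V V"
  proof
    fix Y assume "Y \<in> corner W W"
    then obtain X where "Y = W ** X ** W" unfolding corner_def by auto
    then have "Y = V ** (W ** X ** W) ** V" by (metis VW WV matrix_mul_assoc)
    then show "Y \<in> corner V V" unfolding corner_def by auto
  qed
qed

lemma orth_proj_diff:
  assumes P: "orth_proj P" and W: "orth_proj W" and sub: "P ** W = W"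
  shows "orth_proj (P - W)"
  using orth_proj_mult_commute[OF P W sub] sub P W
  by (simp add: orth_proj_def matrix_diff_ldistrib matrix_diff_rdistrib)

lemma orth_proj_commute_of_invariant:
  assumes P: "orth_proj P" and A: "P ** A ** P = A ** P" and A': "P ** cadj A ** P = cadj A ** P"
  shows "A ** P = P ** A"
proof -
  have "P ** A = cadj (cadj A ** P)" by (simp add: cadj_mult orth_proj_cadj[OF P])
  also have "\<dots> = cadj (P ** cadj A ** P)" by (simp only: A')
  also have "\<dots> = P ** A ** P" by (simp add: cadj_mult orth_proj_cadj[OF P] matrix_mul_assoc)
  finally show ?thesis by (simp add: A)
qed

lemma zero_in_corner: "0 \<in> corner V W"
  unfolding corner_def by (auto intro!: exI[of _ 0])

lemma trace_corner_mult_cadj: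
  fixes W :: "'n::finite cmat"
  assumes W: "orth_proj W"
  shows "trace ((W ** M ** W) ** cadj (W ** M ** W)) = tr_inner M (W ** M ** W)"
proof -
  have "trace ((W ** M ** W) ** cadj (W ** M ** W)) = trace (W ** (M ** W ** cadj M ** W))"
    by (simp add: cadj_mult orth_proj_cadj[OF W] matrix_mul_assoc mult_orth_proj_idem[OF W])
  also have "\<dots> = trace (M ** W ** cadj M ** W ** W)"
    by (subst trace_mul_sym) (simp add: matrix_mul_assoc)
  also have "\<dots> = tr_inner M (W ** M ** W)"
    by (simp add: tr_inner_def cadj_mult orth_proj_cadj[OF W] matrix_mul_assoc
        mult_orth_proj_idem[OF W])
  finally show ?thesis .
qed

lemma tr_inner_corner:
  fixes W :: "'n::finite cmat"
  assumes "orth_proj W"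
  shows "tr_inner X (W ** Z ** W) = tr_inner (W ** X ** W) Z"
proof -
  have "tr_inner X (W ** Z ** W) = trace ((X ** W ** cadj Z) ** W)"
    by (simp add: tr_inner_def cadj_mult orth_proj_cadj[OF assms] matrix_mul_assoc)
  also have "\<dots> = trace (W ** (X ** W ** cadj Z))"
    by (rule trace_mul_sym)
  finally show ?thesis by (simp add: tr_inner_def matrix_mul_assoc)
qed

section \<open>Orthogonal projections onto complex subspaces\<close>

definition cinner :: "complex^'n::finite \<Rightarrow> complex^'n \<Rightarrow> complex" where
  "cinner x y = (\<Sum>i\<in>UNIV. x$i * cnj (y$i))"

lemma cinner_add_left: "cinner (x + y) z = cinner x z + cinner y z"
  by (simp add: cinner_def distrib_right sum.distrib)

lemma cinner_diff_left: "cinner (x - y) z = cinner x z - cinner y z"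
  by (simp add: cinner_def left_diff_distrib sum_subtractf)

lemma cinner_diff_right: "cinner x (y - z) = cinner x y - cinner x z"
  by (simp add: cinner_def right_diff_distrib sum_subtractf)

lemma cinner_scale_left: "cinner (c *s x) y = c * cinner x y"
  by (simp add: cinner_def sum_distrib_left mult.assoc)

lemma cinner_scale_right: "cinner x (c *s y) = cnj c * cinner x y"
  by (simp add: cinner_def sum_distrib_left mult.assoc mult.left_commute)

lemma cinner_commute: "cinner y x = cnj (cinner x y)"
  by (simp add: cinner_def mult.commute)

lemma cinner_axis: "cinner x (axis i 1) = x $ i"
  by (simp add: cinner_def axis_def if_distrib cong: if_cong)

lemma cinner_self_eq_0D: "cinner x x = 0 \<Longrightarrow> x = 0"
proof -
  have "cinner x x = (\<Sum>i\<in>UNIV. complex_of_real ((cmod (x$i))\<^sup>2))"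
    unfolding cinner_def by (simp only: complex_norm_square)
  also have "\<dots> = complex_of_real ((norm x)\<^sup>2)"
    by (simp add: norm_vec_def L2_set_def sum_nonneg)
  finally show "cinner x x = 0 \<Longrightarrow> x = 0" by simp
qed

lemma inner_eq_Re_cinner: "x \<bullet> y = Re (cinner x y)"
  by (simp add: inner_vec_def cinner_def inner_complex_def Re_sum)

lemma vec_subspace_orthogonal_decomp:
  assumes E: "vec.subspace E"
  shows "\<exists>y. y \<in> E \<and> (\<forall>w\<in>E. cinner (x - y) w = 0)"
proof -
  have scaleR: "c *\<^sub>R v = complex_of_real c *s v" for c and v :: "complex^'n"
    unfolding vec_eq_iff by (auto simp: scaleR_conv_of_real[where 'a=complex])
  have "subspace E"
    using E by (simp add: vec.subspace_def subspace_def scaleR)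
  then obtain y z where y: "y \<in> E" and z: "\<And>w. w \<in> E \<Longrightarrow> orthogonal z w" and xyz: "x = y + z"
    using orthogonal_subspace_decomp_exists[of E x] by (metis span_eq_iff)
  have "cinner z w = 0" if w: "w \<in> E" for w
  proof -
    have "Re (cinner z w) = 0" using z[OF w] by (simp add: orthogonal_def inner_eq_Re_cinner)
    moreover have "Re (cinner z (\<i> *s w)) = 0"
      using z E w by (simp add: orthogonal_def inner_eq_Re_cinner vec.subspace_scale)
    ultimately show ?thesis by (simp add: cinner_scale_right complex_eq_iff)
  qed
  with y xyz show ?thesis by (intro exI[of _ y]) auto
qed

definition cproj :: "(complex^'n::finite) set \<Rightarrow> complex^'n \<Rightarrow> complex^'n" where
  "cproj E x = (SOME y. y \<in> E \<and> (\<forall>w\<in>E. cinner (x - y) w = 0))"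

context
  fixes E :: "(complex^'n::finite) set"
  assumes E: "vec.subspace E"
begin

lemma cproj_mem: "cproj E x \<in> E"
  and cproj_orthogonal: "w \<in> E \<Longrightarrow> cinner (x - cproj E x) w = 0"
  using someI_ex[OF vec_subspace_orthogonal_decomp[OF E, of x]] unfolding cproj_def by auto

lemma cproj_unique:
  assumes y: "y \<in> E" "\<And>w. w \<in> E \<Longrightarrow> cinner (x - y) w = 0"
  shows "cproj E x = y"
proof -
  have d: "cproj E x - y \<in> E" using E cproj_mem y(1) by (rule vec.subspace_diff)
  have "cinner (cproj E x - y) (cproj E x - y)
      = cinner (x - y) (cproj E x - y) - cinner (x - cproj E x) (cproj E x - y)"
    by (simp add: cinner_diff_left[symmetric])
  also have "\<dots> = 0" using y(2) cproj_orthogonal d by simp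
  finally show ?thesis using cinner_self_eq_0D[of "cproj E x - y"] by simp
qed

lemma cproj_id: "y \<in> E \<Longrightarrow> cproj E y = y"
  by (rule cproj_unique) (simp_all add: cinner_def)

lemma cproj_linear: "Vector_Spaces.linear (*s) (*s) (cproj E)"
proof unfold_locales
  fix x y
  show "cproj E (x + y) = cproj E x + cproj E y"
  proof (rule cproj_unique)
    show "cproj E x + cproj E y \<in> E" using E cproj_mem cproj_mem by (rule vec.subspace_add)
    fix w assume "w \<in> E"
    then show "cinner (x + y - (cproj E x + cproj E y)) w = 0"
      by (simp only: add_diff_add cinner_add_left cproj_orthogonal add_0)
  qed
next
  fix c x
  show "cproj E (c *s x) = c *s cproj E x"
  proof (rule cproj_unique)
    show "c *s cproj E x \<in> E" using E cproj_mem by (rule vec.subspace_scale)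
    fix w assume "w \<in> E"
    then show "cinner (c *s x - c *s cproj E x) w = 0"
      by (simp only: vector_ssub_ldistrib[symmetric] cinner_scale_left cproj_orthogonal
          mult_zero_right)
  qed
qed

lemma matrix_cproj: "matrix (cproj E) *v x = cproj E x"
  by (rule matrix_works[OF cproj_linear])

lemma cinner_cproj_commute: "cinner x (cproj E y) = cinner (cproj E x) y"
proof -
  have "cinner x (cproj E y) = cinner (cproj E x) (cproj E y)"
    using cproj_orthogonal[of "cproj E y" x] cproj_mem by (simp add: cinner_diff_left)
  also have "\<dots> = cinner (cproj E x) y"
    using cproj_orthogonal[of "cproj E x" y] cproj_mem
      cinner_commute[of "cproj E x" "y - cproj E y"]
    by (simp add: cinner_diff_right)
  finally show ?thesis .
qed

lemma orth_proj_matrix_cproj: "orth_proj (matrix (cproj E))"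
proof -
  have "matrix (cproj E) ** matrix (cproj E) = matrix (cproj E)"
    by (simp add: matrix_eq matrix_vector_mul_assoc[symmetric] matrix_cproj cproj_id cproj_mem)
  moreover have "cadj (matrix (cproj E)) = matrix (cproj E)"
    using cinner_cproj_commute[of "axis _ 1" "axis _ 1"]
    by (simp add: cadj_def matrix_def vec_eq_iff cinner_axis cinner_commute[of "axis _ 1"])
  ultimately show ?thesis by (simp add: orth_proj_def)
qed

end

lemma fixed_space_subspace: "vec.subspace {v. A *v v = v}"
  by (rule vec.subspaceI) (simp_all add: matrix_vector_right_distrib vec.scale)

definition proj_rank :: "'n::finite cmat \<Rightarrow> nat" where
  "proj_rank W = vec.dim {v. W *v v = v}"

lemma proj_rank_less:
  fixes W W' :: "'n::finite cmat"
  assumes W: "orth_proj W" and W': "orth_proj W'" and sub: "W ** W' = W'" and ne: "W' \<noteq> W"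
  shows "proj_rank W' < proj_rank W"
proof -
  let ?S = "{v. W *v v = v}" and ?S' = "{v. W' *v v = v}"
  have "?S' \<subseteq> ?S"
  proof
    fix v assume "v \<in> ?S'"
    then have "W *v v = (W ** W') *v v" by (simp flip: matrix_vector_mul_assoc)
    with \<open>v \<in> ?S'\<close> show "v \<in> ?S" by (simp add: sub)
  qed
  moreover have "\<not> ?S \<subseteq> ?S'"
  proof
    assume "?S \<subseteq> ?S'"
    have "W' ** W = W"
    proof (rule matrix_eq[THEN iffD2], intro allI)
      fix v
      have "W *v v \<in> ?S" by (simp add: matrix_vector_mul_assoc orth_proj_idem[OF W])
      with \<open>?S \<subseteq> ?S'\<close> have "W' *v (W *v v) = W *v v" by blast
      then show "(W' ** W) *v v = W *v v" by (simp add: matrix_vector_mul_assoc)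
    qed
    then have "W ** W' = W" by (rule orth_proj_mult_commute[OF W' W])
    with sub ne show False by simp
  qed
  ultimately have "?S' \<subset> ?S" by blast
  moreover have span: "vec.span {v. A *v v = v} = {v. A *v v = v}" for A :: "'n cmat"
    using fixed_space_subspace by (rule vec.span_eq_iff[THEN iffD2])
  ultimately have "vec.span ?S' \<subset> vec.span ?S" by (simp only: span)
  then show ?thesis unfolding proj_rank_def by (rule vec.dim_psubset)
qed

section \<open>Kraus maps and their invariant corners\<close>

definition commutant :: "'n::finite cmat list \<Rightarrow> 'n cmat set" where
  "commutant Rs = {A. \<forall>R\<in>set Rs. R ** A = A ** R \<and> cadj R ** A = A ** cadj R}"

lemma commutant_of_commute:
  assumes "cadj W = W" and "\<And>R. R \<in> set Rs \<Longrightarrow> R ** W = W ** R"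
  shows "W \<in> commutant Rs"
  unfolding commutant_def
proof (intro CollectI ballI conjI)
  fix R assume R: "R \<in> set Rs"
  show "R ** W = W ** R" using R by (rule assms(2))
  show "cadj R ** W = W ** cadj R"
    using arg_cong[OF assms(2)[OF R], of cadj] by (simp add: cadj_mult assms(1))
qed

lemma mat_1_commutant: "mat 1 \<in> commutant Rs"
  by (simp add: commutant_def)

lemma commutant_diff: "A \<in> commutant Rs \<Longrightarrow> B \<in> commutant Rs \<Longrightarrow> A - B \<in> commutant Rs"
  by (simp add: commutant_def matrix_diff_ldistrib matrix_diff_rdistrib)

lemma perp_commutant: "W \<in> commutant Rs \<Longrightarrow> perp W \<in> commutant Rs"
  unfolding perp_def by (intro commutant_diff mat_1_commutant)

locale kraus_map =
  fixes T :: "'n::finite cmat \<Rightarrow> 'n cmat" and Rs :: "'n cmat list"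
  assumes kraus: "\<And>X. T X = (\<Sum>R\<leftarrow>Rs. R ** X ** cadj R)"
begin

lemma add: "T (X + Y) = T X + T Y"
  by (simp add: kraus matrix_add_ldistrib matrix_add_rdistrib sum_list_addf)

lemma zero [simp]: "T 0 = 0"
  by (simp add: kraus)

lemma diff: "T (X - Y) = T X - T Y"
  by (simp add: kraus matrix_diff_ldistrib matrix_diff_rdistrib sum_list_subtractf)

lemma sum: "T (\<Sum>i\<in>S. f i) = (\<Sum>i\<in>S. T (f i))"
  by (induction S rule: infinite_finite_induct) (auto simp: add)

lemma mult_left:
  assumes "A \<in> commutant Rs"
  shows "T (A ** X) = A ** T X"
proof -
  have "R ** (A ** X) ** cadj R = A ** (R ** X ** cadj R)" if "R \<in> set Rs" for R
  proof -
    have "R ** A = A ** R" using assms that by (simp add: commutant_def)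
    then show ?thesis by (metis matrix_mul_assoc)
  qed
  then show ?thesis by (simp add: kraus matrix_sum_list_ldistrib cong: map_cong)
qed

lemma mult_right:
  assumes "A \<in> commutant Rs"
  shows "T (X ** A) = T X ** A"
proof -
  have "R ** (X ** A) ** cadj R = (R ** X ** cadj R) ** A" if "R \<in> set Rs" for R
  proof -
    have "cadj R ** A = A ** cadj R" using assms that by (simp add: commutant_def)
    then show ?thesis by (metis matrix_mul_assoc)
  qed
  then show ?thesis by (simp add: kraus matrix_sum_list_rdistrib cong: map_cong)
qed

lemma sandwich:
  "A \<in> commutant Rs \<Longrightarrow> B \<in> commutant Rs \<Longrightarrow> T (A ** X ** B) = A ** T X ** B"
  by (simp add: mult_left mult_right)

lemma commutant_invariant_corner: "W \<in> commutant Rs \<Longrightarrow> T ` corner W W \<subseteq> corner W W"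
  unfolding corner_def using sandwich by auto

lemma sandwich_positive_eq_0D:
  assumes "A ** T (B ** cadj B) ** cadj A = 0" and "R \<in> set Rs"
  shows "A ** R ** B = 0"
proof -
  have "A ** T (B ** cadj B) ** cadj A = (\<Sum>R\<leftarrow>Rs. (A ** R ** B) ** cadj (A ** R ** B))"
    unfolding kraus matrix_sum_list_ldistrib matrix_sum_list_rdistrib
    by (simp add: cadj_mult matrix_mul_assoc)
  with assms show ?thesis
    by (intro sum_list_mult_cadj_eq_0D[of "\<lambda>R. A ** R ** B"]) simp_all
qed

lemma invariant_corner_perp_mult:
  assumes W: "orth_proj W" and inv: "T ` corner W W \<subseteq> corner W W" and R: "R \<in> set Rs"
  shows "perp W ** R ** W = 0"
proof (rule sandwich_positive_eq_0D[OF _ R])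
  have "T W \<in> corner W W" using inv self_in_corner[OF W] by blast
  then have "T (W ** cadj W) = W ** T W ** W"
    by (simp add: corner_sandwich[OF W] orth_proj_cadj[OF W] orth_proj_idem[OF W])
  then have "perp W ** T (W ** cadj W) ** cadj (perp W) = (perp W ** W) ** T W ** (W ** perp W)"
    by (simp add: orth_proj_cadj[OF orth_proj_perp[OF W]] matrix_mul_assoc)
  then show "perp W ** T (W ** cadj W) ** cadj (perp W) = 0"
    by (simp add: mult_perp_left[OF W] mult_perp_right[OF W])
qed

text \<open>By self-adjointness, T (perp W) is orthogonal to the invariant corner of W,
  so its block W T (perp W) W vanishes.\<close>
lemma invariant_corner_mult_perp:
  assumes SA: "trace_self_adjoint T" and W: "orth_proj W" and inv: "T ` corner W W \<subseteq> corner W W"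
    and R: "R \<in> set Rs"
  shows "W ** R ** perp W = 0"
proof (rule sandwich_positive_eq_0D[OF _ R])
  have "tr_inner (T (perp W)) (W ** Z ** W) = 0" for Z
  proof -
    have "T (W ** Z ** W) \<in> corner W W" using inv unfolding corner_def by blast
    then obtain Y where Y: "T (W ** Z ** W) = W ** Y ** W" unfolding corner_def by blast
    have "tr_inner (T (perp W)) (W ** Z ** W) = tr_inner (perp W) (T (W ** Z ** W))"
      using SA unfolding trace_self_adjoint_def by blast
    also have "\<dots> = tr_inner (perp W) (W ** Y ** W)" by (simp only: Y)
    also have "\<dots> = trace ((perp W ** W) ** cadj Y ** W)"
      by (simp add: tr_inner_def cadj_mult orth_proj_cadj[OF W] matrix_mul_assoc)
    finally show ?thesis by (simp add: mult_perp_left[OF W])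
  qed
  then have "trace ((W ** T (perp W) ** W) ** cadj (W ** T (perp W) ** W)) = 0"
    by (simp only: trace_corner_mult_cadj[OF W])
  then show "W ** T (perp W ** cadj (perp W)) ** cadj W = 0"
    using orth_proj_perp[OF W]
    by (simp add: trace_mult_cadj_eq_0_iff orth_proj_cadj orth_proj_idem orth_proj_cadj[OF W])
qed

lemma invariant_corner_commutant:
  assumes SA: "trace_self_adjoint T" and W: "orth_proj W" and inv: "T ` corner W W \<subseteq> corner W W"
  shows "W \<in> commutant Rs"
proof (rule commutant_of_commute[OF orth_proj_cadj[OF W]])
  fix R assume R: "R \<in> set Rs"
  have "R ** W = (W + perp W) ** R ** W" by (simp add: add_perp)
  also have "\<dots> = W ** R ** (W + perp W)"
    using invariant_corner_perp_mult[OF W inv R] invariant_corner_mult_perp[OF SA W inv R]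
    by (simp add: matrix_add_rdistrib matrix_add_ldistrib)
  also have "\<dots> = W ** R" by (simp add: add_perp)
  finally show "R ** W = W ** R" .
qed

text \<open>The projection onto the intersection of the ranges of V and Q commutes with the Kraus
  operators, so by irreducibility it is 0 or V.\<close>
lemma irreducible_range_dichotomy:
  assumes Q: "orth_proj Q" "Q \<in> commutant Rs" and V: "orth_proj V" "V \<in> commutant Rs"
    and irr: "irreducible_on T V"
  shows "Q ** V = V \<or> (\<forall>v. V *v v = v \<and> Q *v v = v \<longrightarrow> v = 0)"
proof -
  define E where "E = {v. V *v v = v} \<inter> {v. Q *v v = v}"
  define P where "P = matrix (cproj E)"
  have "vec.subspace E" unfolding E_def by (intro vec.subspace_inter fixed_space_subspace)
  then have P: "orth_proj P" and PE: "\<And>v. P *v v \<in> E" and Pid: "\<And>v. v \<in> E \<Longrightarrow> P *v v = v"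
    unfolding P_def by (simp_all add: orth_proj_matrix_cproj matrix_cproj cproj_mem cproj_id)
  have invariant: "P ** A ** P = A ** P" if "A ** V = V ** A" "A ** Q = Q ** A" for A
  proof -
    have "A *v (P *v v) \<in> E" for v
      using PE[of v] that by (simp add: E_def matrix_vector_mul_assoc) (metis matrix_vector_mul_assoc)
    then show ?thesis by (simp add: matrix_eq Pid flip: matrix_vector_mul_assoc)
  qed
  have "P \<in> commutant Rs"
  proof (rule commutant_of_commute[OF orth_proj_cadj[OF P]])
    fix R assume "R \<in> set Rs"
    with Q(2) V(2) have "R ** V = V ** R" "R ** Q = Q ** R"
      and "cadj R ** V = V ** cadj R" "cadj R ** Q = Q ** cadj R"
      by (auto simp: commutant_def)
    then have "P ** R ** P = R ** P" "P ** cadj R ** P = cadj R ** P"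
      by (simp_all add: invariant)
    then show "R ** P = P ** R" by (rule orth_proj_commute_of_invariant[OF P])
  qed
  moreover have "V ** P = P"
    using PE by (simp add: matrix_eq E_def flip: matrix_vector_mul_assoc)
  ultimately have "P = 0 \<or> P = V"
    using irr P V(1) commutant_invariant_corner corner_subset_iff unfolding irreducible_on_def by blast
  then show ?thesis
  proof
    assume "P = 0"
    then show ?thesis using Pid by (auto simp: E_def)
  next
    assume "P = V"
    then show ?thesis using PE by (simp add: matrix_eq E_def flip: matrix_vector_mul_assoc)
  qed
qed

end

section \<open>Block decompositions\<close>

lemma corner_sum_single:
  assumes "i < length Ws" and "Y \<in> corner (Ws!i) (Ws!i)"
  shows "Y \<in> corner_sum Ws"
proof -
  let ?Xs = "map (\<lambda>j. if j = i then Y else 0) [0..<length Ws]"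
  have "sum_list ?Xs = Y"
    using assms(1) by (simp flip: sum_set_upt_conv_sum_list_nat)
  then show ?thesis
    unfolding corner_sum_def using assms by (intro CollectI exI[of _ ?Xs]) (auto simp: zero_in_corner)
qed

lemma orth_compl_corner_sum_iff:
  assumes orth: "\<And>i. i < length Ws \<Longrightarrow> orth_proj (Ws!i)"
  shows "X \<in> orth_compl (corner_sum Ws) \<longleftrightarrow> (\<forall>i<length Ws. Ws!i ** X ** Ws!i = 0)"
proof
  assume X: "X \<in> orth_compl (corner_sum Ws)"
  show "\<forall>i<length Ws. Ws!i ** X ** Ws!i = 0"
  proof (intro allI impI)
    fix i assume i: "i < length Ws"
    have "Ws!i ** X ** Ws!i \<in> corner_sum Ws"
      by (rule corner_sum_single[OF i]) (auto simp: corner_def)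
    then have "tr_inner X (Ws!i ** X ** Ws!i) = 0" using X by (simp add: orth_compl_def)
    then show "Ws!i ** X ** Ws!i = 0"
      by (simp add: trace_corner_mult_cadj[OF orth[OF i], symmetric] trace_mult_cadj_eq_0_iff)
  qed
next
  assume blocks: "\<forall>i<length Ws. Ws!i ** X ** Ws!i = 0"
  have "tr_inner X Y = 0" if "Y \<in> corner_sum Ws" for Y
  proof -
    obtain Xs where len: "length Xs = length Ws"
      and Xs: "\<And>i. i < length Ws \<Longrightarrow> Xs!i \<in> corner (Ws!i) (Ws!i)" and Y: "Y = sum_list Xs"
      using \<open>Y \<in> corner_sum Ws\<close> unfolding corner_sum_def by auto
    have "tr_inner X (Xs!i) = 0" if i: "i < length Ws" for i
    proof -
      obtain Z where "Xs!i = Ws!i ** Z ** Ws!i" using Xs[OF i] unfolding corner_def by auto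
      then show ?thesis using blocks i by (simp add: tr_inner_corner[OF orth[OF i]])
    qed
    then show ?thesis
      unfolding Y tr_inner_sum_list_right by (auto simp: sum_list_sum_nth len intro!: sum.neutral)
  qed
  then show "X \<in> orth_compl (corner_sum Ws)" by (simp add: orth_compl_def)
qed

definition orth_proj_family :: "'n::finite cmat list \<Rightarrow> bool" where
  "orth_proj_family Ws \<longleftrightarrow> (\<forall>i<length Ws. orth_proj (Ws!i)) \<and>
     (\<forall>i<length Ws. \<forall>j<length Ws. i \<noteq> j \<longrightarrow> Ws!i ** Ws!j = 0)"

lemma orth_proj_family_mult:
  assumes "orth_proj_family Ws" "i < length Ws" "j < length Ws"
  shows "Ws!i ** Ws!j = (if i = j then Ws!i else 0)"
  using assms by (auto simp: orth_proj_family_def orth_proj_idem)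

lemma orth_proj_family_ConsI:
  assumes W: "orth_proj W" and orth: "\<And>V. V \<in> set Ws \<Longrightarrow> W ** V = 0"
    and Ws: "orth_proj_family Ws"
  shows "orth_proj_family (W # Ws)"
proof -
  have "V ** W = 0" if V: "V \<in> set Ws" for V
  proof -
    have "orth_proj V" using Ws V by (auto simp: orth_proj_family_def in_set_conv_nth)
    then have "V ** W = cadj (W ** V)" by (simp add: cadj_mult orth_proj_cadj W)
    then show ?thesis by (simp add: orth[OF V])
  qed
  then show ?thesis
    using W orth Ws unfolding orth_proj_family_def
    by (auto simp: nth_Cons split: nat.split)
qed

lemma sum_list_mult_member:
  assumes "orth_proj_family Ws" "k < length Ws"
  shows "sum_list Ws ** Ws!k = Ws!k"
proof -
  have "sum_list Ws ** Ws!k = (\<Sum>j<length Ws. Ws!j ** Ws!k)"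
    by (simp add: sum_list_sum_nth atLeast0LessThan matrix_sum_rdistrib)
  also have "\<dots> = Ws!k"
    using assms by (simp add: orth_proj_family_mult if_distrib cong: if_cong)
  finally show ?thesis .
qed

lemma block_of_block_sum:
  assumes "orth_proj_family Ws" "j < length Ws"
  shows "Ws!j ** (\<Sum>i<length Ws. Ws!i ** Z ** Ws!i) ** Ws!j = Ws!j ** Z ** Ws!j"
proof -
  have "Ws!j ** (\<Sum>i<length Ws. Ws!i ** Z ** Ws!i) ** Ws!j
      = (\<Sum>i<length Ws. (Ws!j ** Ws!i) ** Z ** (Ws!i ** Ws!j))"
    by (simp add: matrix_sum_ldistrib matrix_sum_rdistrib matrix_mul_assoc)
  also have "\<dots> = Ws!j ** Z ** Ws!j"
    using assms by (simp add: orth_proj_family_mult if_distrib cong: if_cong)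
  finally show ?thesis .
qed

locale irreducible_decomposition = kraus_map +
  fixes Ws :: "'n::finite cmat list"
  assumes family: "orth_proj_family Ws"
    and commutant: "\<And>i. i < length Ws \<Longrightarrow> Ws!i \<in> commutant Rs"
    and irreducible: "\<And>i. i < length Ws \<Longrightarrow> irreducible_on T (Ws!i)"
    and vanishes_off_blocks: "\<And>X. \<forall>i<length Ws. Ws!i ** X ** Ws!i = 0 \<Longrightarrow> T X = 0"
begin

lemma orth_proj_block: "i < length Ws \<Longrightarrow> orth_proj (Ws!i)"
  using family by (simp add: orth_proj_family_def)

lemma block_expansion: "T Z = (\<Sum>i<length Ws. Ws!i ** T Z ** Ws!i)"
proof -
  have "T (Z - (\<Sum>i<length Ws. Ws!i ** Z ** Ws!i)) = 0"
    by (intro vanishes_off_blocks allI impI)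
      (simp add: block_of_block_sum[OF family] matrix_diff_ldistrib matrix_diff_rdistrib)
  then have "T Z = T (\<Sum>i<length Ws. Ws!i ** Z ** Ws!i)"
    by (simp add: diff)
  also have "\<dots> = (\<Sum>i<length Ws. Ws!i ** T Z ** Ws!i)"
    by (simp add: sum sandwich commutant)
  finally show ?thesis .
qed

lemma block_range:
  assumes i: "i < length Ws"
  shows "Ws!i ** T (X ** Ws!i) = T (X ** Ws!i)"
proof -
  have "T (X ** Ws!i) = (\<Sum>j<length Ws. Ws!j ** T X ** (Ws!i ** Ws!j))"
    by (subst block_expansion) (simp add: mult_right commutant[OF i] matrix_mul_assoc)
  also have "\<dots> = Ws!i ** T X ** Ws!i"
    using i by (simp add: orth_proj_family_mult[OF family] if_distrib cong: if_cong)
  finally show ?thesis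
    by (simp add: matrix_mul_assoc orth_proj_idem[OF orth_proj_block[OF i]])
qed

text \<open>The commutant maps the range of T (W_i Z W_i) into the range of W_i; hence W and perp W
  map it into the trivial intersections.\<close>
lemma block_vanishes_if_ranges_meet_trivially:
  assumes i: "i < length Ws" and W: "orth_proj W" "W \<in> commutant Rs"
    and meet_W: "\<And>v. Ws!i *v v = v \<Longrightarrow> W *v v = v \<Longrightarrow> v = 0"
    and meet_perp: "\<And>v. Ws!i *v v = v \<Longrightarrow> perp W *v v = v \<Longrightarrow> v = 0"
  shows "T (Ws!i ** Z ** Ws!i) = 0"
proof -
  let ?G = "T (Ws!i ** Z ** Ws!i)"
  have range: "Q ** ?G = Ws!i ** (Q ** ?G)" if "Q \<in> commutant Rs" for Q
    using block_range[OF i, of "Q ** Ws!i ** Z"] mult_left[OF that, of "Ws!i ** Z ** Ws!i"]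
    by (simp add: matrix_mul_assoc)
  have "?G *v v = 0" for v
  proof -
    let ?g = "?G *v v"
    have "W *v ?g = 0"
      using range[OF W(2)] orth_proj_idem[OF W(1)]
      by (intro meet_W) (metis matrix_vector_mul_assoc)+
    moreover have "perp W *v ?g = 0"
      using range[OF perp_commutant[OF W(2)]] orth_proj_idem[OF orth_proj_perp[OF W(1)]]
      by (intro meet_perp) (metis matrix_vector_mul_assoc)+
    ultimately show ?thesis
      by (simp add: perp_def matrix_vector_mult_diff_rdistrib)
  qed
  then show ?thesis by (simp add: matrix_eq)
qed

lemma block_off_diagonal_vanishes:
  assumes i: "i < length Ws" and W: "orth_proj W" "W \<in> commutant Rs"
  shows "T (Ws!i ** (W ** Y ** perp W) ** Ws!i) = 0"
proof -
  have Wi: "orth_proj (Ws!i)" "Ws!i \<in> commutant Rs" "irreducible_on T (Ws!i)"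
    using i by (simp_all add: orth_proj_block commutant irreducible)
  consider "W ** Ws!i = Ws!i" | "perp W ** Ws!i = Ws!i"
    | "\<And>v. Ws!i *v v = v \<Longrightarrow> W *v v = v \<Longrightarrow> v = 0"
      "\<And>v. Ws!i *v v = v \<Longrightarrow> perp W *v v = v \<Longrightarrow> v = 0"
    using irreducible_range_dichotomy[OF W Wi] 
      irreducible_range_dichotomy[OF orth_proj_perp[OF W(1)] perp_commutant[OF W(2)] Wi]
    by blast
  then show ?thesis
  proof cases
    case 1
    then have "perp W ** Ws!i = 0" by (simp add: perp_def matrix_diff_rdistrib)
    then show ?thesis by (simp flip: matrix_mul_assoc)
  next
    case 2
    then have "W ** Ws!i = 0" by (simp add: perp_def matrix_diff_rdistrib)
    then have "Ws!i ** W = 0"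
      using arg_cong[of _ _ cadj] by (metis W(1) Wi(1) cadj_0 cadj_mult orth_proj_cadj)
    then show ?thesis by (simp add: matrix_mul_assoc)
  next
    case 3
    then show ?thesis by (rule block_vanishes_if_ranges_meet_trivially[OF i W])
  qed
qed

lemma off_diagonal_vanishes:
  assumes "orth_proj W" "W \<in> commutant Rs"
  shows "T (W ** Y ** perp W) = 0"
  by (subst block_expansion)
    (simp add: commutant assms block_off_diagonal_vanishes flip: sandwich)

end

section \<open>Decomposition into irreducible blocks\<close>

context kraus_map
begin

text \<open>A nonzero invariant subprojection of minimal rank is irreducible.\<close>
lemma exists_irreducible_subprojection:
  assumes SA: "trace_self_adjoint T" and P: "orth_proj P" "P \<in> commutant Rs" "P \<noteq> 0"
  obtains W where "orth_proj W" "W \<in> commutant Rs" "W \<noteq> 0" "P ** W = W" "irreducible_on T W"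
proof -
  let ?S = "\<lambda>W. orth_proj W \<and> W \<in> commutant Rs \<and> W \<noteq> 0 \<and> P ** W = W"
  have "?S P" using P orth_proj_idem by simp
  then obtain W where SW: "?S W" and min: "\<And>W'. ?S W' \<Longrightarrow> proj_rank W \<le> proj_rank W'"
    using ex_has_least_nat[of ?S P proj_rank] by blast
  have "irreducible_on T W"
    unfolding irreducible_on_def
  proof (intro allI impI)
    fix W' assume W': "orth_proj W' \<and> corner W' W' \<subseteq> corner W W \<and> T ` corner W' W' \<subseteq> corner W' W'"
    then have comm: "W' \<in> commutant Rs" using invariant_corner_commutant[OF SA] by blast
    have sub: "W ** W' = W'" using W' SW corner_subset_iff by blast
    show "W' = 0 \<or> W' = W"
    proof (rule ccontr)
      assume "\<not> (W' = 0 \<or> W' = W)"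
      moreover have "P ** W' = W'"
        using SW sub matrix_mul_assoc[of P W W'] by simp
      ultimately have "proj_rank W \<le> proj_rank W'" using W' comm by (intro min) simp
      moreover have "proj_rank W' < proj_rank W"
        using proj_rank_less SW W' sub \<open>\<not> (W' = 0 \<or> W' = W)\<close> by blast
      ultimately show False by simp
    qed
  qed
  with SW that show ?thesis by blast
qed

lemma exists_irreducible_decomposition:
  assumes SA: "trace_self_adjoint T"
  shows "orth_proj P \<Longrightarrow> P \<in> commutant Rs \<Longrightarrow> \<exists>Ws. orth_proj_family Ws \<and>
    (\<forall>W\<in>set Ws. W \<in> commutant Rs \<and> irreducible_on T W) \<and> sum_list Ws = P"
proof (induction "proj_rank P" arbitrary: P rule: less_induct)
  case less
  show ?case
  proof (cases "P = 0")
    case True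
    then show ?thesis by (intro exI[of _ "[]"]) (simp add: orth_proj_family_def)
  next
    case False
    with less.prems obtain W where W: "orth_proj W" "W \<in> commutant Rs" "W \<noteq> 0" "P ** W = W"
      and irr: "irreducible_on T W"
      by (rule exists_irreducible_subprojection[OF SA])
    let ?P' = "P - W"
    have P': "orth_proj ?P'" "?P' \<in> commutant Rs"
      using orth_proj_diff less.prems W by (simp_all add: commutant_diff)
    have "P ** ?P' = ?P'" using less.prems(1) W(4) by (simp add: matrix_diff_ldistrib orth_proj_idem)
    then have "proj_rank ?P' < proj_rank P"
      by (intro proj_rank_less less.prems(1) P'(1)) (use W(3) in auto)
    then obtain Ws where Ws: "orth_proj_family Ws" "\<forall>V\<in>set Ws. V \<in> commutant Rs \<and> irreducible_on T V"
      "sum_list Ws = ?P'"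
      using less.hyps P' by blast
    have "W ** ?P' = 0"
      using orth_proj_mult_commute[OF less.prems(1) W(1,4)] W(1)
      by (simp add: matrix_diff_ldistrib orth_proj_idem)
    have "W ** V = 0" if V: "V \<in> set Ws" for V
    proof -
      obtain k where k: "k < length Ws" "V = Ws!k"
        using V by (auto simp: in_set_conv_nth)
      then have "W ** V = (W ** ?P') ** V"
        using sum_list_mult_member[OF Ws(1) k(1)] Ws(3) by (simp flip: matrix_mul_assoc)
      with \<open>W ** ?P' = 0\<close> show ?thesis by simp
    qed
    then have "orth_proj_family (W # Ws)" by (intro orth_proj_family_ConsI W(1) Ws(1))
    then show ?thesis using Ws W(2) irr by (intro exI[of _ "W # Ws"]) auto
  qed
qed

lemma vanishes_of_diagonal_blocks_vanish:
  assumes off: "\<And>W Y. orth_proj W \<Longrightarrow> W \<in> commutant Rs \<Longrightarrow> T (W ** Y ** perp W) = 0"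
    and Ws: "orth_proj_family Ws" "\<And>i. i < length Ws \<Longrightarrow> Ws!i \<in> commutant Rs" "sum_list Ws = mat 1"
    and blocks: "\<forall>i<length Ws. Ws!i ** X ** Ws!i = 0"
  shows "T X = 0"
proof -
  let ?n = "length Ws"
  have block_vanishes: "T (Ws!a ** X ** Ws!b) = 0" if a: "a < ?n" and b: "b < ?n" for a b
  proof (cases "a = b")
    case True
    then show ?thesis using blocks a by simp
  next
    case False
    have Wa: "orth_proj (Ws!a)" using Ws(1) a by (simp add: orth_proj_family_def)
    have "Ws!b ** perp (Ws!a) = Ws!b"
      using orth_proj_family_mult[OF Ws(1) b a] False by (simp add: perp_def matrix_diff_ldistrib)
    then have "Ws!a ** X ** Ws!b = Ws!a ** (X ** Ws!b) ** perp (Ws!a)"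
      by (simp flip: matrix_mul_assoc)
    then show ?thesis using off[OF Wa Ws(2)[OF a]] by simp
  qed
  have X: "X = (\<Sum>a<?n. \<Sum>b<?n. Ws!a ** X ** Ws!b)"
  proof -
    have one: "(\<Sum>i<?n. Ws!i) = mat 1" using Ws(3) by (simp add: sum_list_sum_nth atLeast0LessThan)
    have "X = (\<Sum>a<?n. Ws!a) ** X ** (\<Sum>b<?n. Ws!b)" by (simp add: one)
    also have "\<dots> = (\<Sum>a<?n. Ws!a ** X ** (\<Sum>b<?n. Ws!b))" by (simp only: matrix_sum_rdistrib)
    also have "\<dots> = (\<Sum>a<?n. \<Sum>b<?n. Ws!a ** X ** Ws!b)" by (simp only: matrix_sum_ldistrib)
    finally show ?thesis .
  qed
  have "T X = (\<Sum>a<?n. \<Sum>b<?n. T (Ws!a ** X ** Ws!b))"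
    using arg_cong[OF X, of T] by (simp only: sum)
  also have "\<dots> = 0" using block_vanishes by simp
  finally show ?thesis .
qed

lemma irreducible_decomposition_of_off_diagonal_vanishes:
  assumes SA: "trace_self_adjoint T"
    and off: "\<And>W Y. orth_proj W \<Longrightarrow> W \<in> commutant Rs \<Longrightarrow> T (W ** Y ** perp W) = 0"
  obtains Ws where "irreducible_decomposition T Rs Ws"
proof -
  obtain Ws where Ws: "orth_proj_family Ws" "\<forall>W\<in>set Ws. W \<in> commutant Rs \<and> irreducible_on T W"
    "sum_list Ws = mat 1"
    using exists_irreducible_decomposition[OF SA, of "mat 1"] mat_1_commutant
    by (auto simp: orth_proj_def)
  have "irreducible_decomposition T Rs Ws"
    by unfold_locales (use Ws in \<open>auto intro: vanishes_of_diagonal_blocks_vanish off\<close>)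
  then show ?thesis by (rule that)
qed

end

context kraus_map
begin

lemma completely_reducible_iff:
  assumes SA: "trace_self_adjoint T"
  shows "completely_reducible T \<longleftrightarrow> (\<exists>Ws. irreducible_decomposition T Rs Ws)"
proof -
  have inv: "(\<forall>i<length Ws. T ` corner (Ws!i) (Ws!i) \<subseteq> corner (Ws!i) (Ws!i)) \<longleftrightarrow>
      (\<forall>i<length Ws. Ws!i \<in> commutant Rs)"
    if "\<forall>i<length Ws. orth_proj (Ws!i)" for Ws
    using that invariant_corner_commutant[OF SA] commutant_invariant_corner by blast
  have compl: "(\<forall>X\<in>orth_compl (corner_sum Ws). T X = 0) \<longleftrightarrow>
      (\<forall>X. (\<forall>i<length Ws. Ws!i ** X ** Ws!i = 0) \<longrightarrow> T X = 0)"
    if "\<forall>i<length Ws. orth_proj (Ws!i)" for Ws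
    using orth_compl_corner_sum_iff[of Ws, OF that[rule_format]] by blast
  show ?thesis
    unfolding completely_reducible_def irreducible_decomposition_def irreducible_decomposition_axioms_def
      orth_proj_family_def
  proof (rule ex_cong1, goal_cases)
    case (1 Ws)
    show ?case
      by (cases "\<forall>i<length Ws. orth_proj (Ws!i)")
        (simp_all add: inv compl kraus_map_axioms imp_conjR all_conj_distrib, blast)
  qed
qed

lemma vanishes_on_off_corners_iff:
  "(\<forall>X\<in>{A + B | A B. A \<in> corner W (perp W) \<and> B \<in> corner (perp W) W}. T X = 0) \<longleftrightarrow>
    (\<forall>Y. T (W ** Y ** perp W) = 0 \<and> T (perp W ** Y ** W) = 0)"
  (is "(\<forall>X\<in>?C. T X = 0) \<longleftrightarrow> _")
proof
  assume vanish: "\<forall>X\<in>?C. T X = 0"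
  show "\<forall>Y. T (W ** Y ** perp W) = 0 \<and> T (perp W ** Y ** W) = 0"
  proof
    fix Y
    have "W ** Y ** perp W \<in> corner W (perp W)" "perp W ** Y ** W \<in> corner (perp W) W"
      unfolding corner_def by blast+
    then have "W ** Y ** perp W + 0 \<in> ?C" and "0 + perp W ** Y ** W \<in> ?C"
      using zero_in_corner by blast+
    with vanish show "T (W ** Y ** perp W) = 0 \<and> T (perp W ** Y ** W) = 0" by auto
  qed
qed (auto simp: corner_def add)

lemma off_corners_vanish_iff:
  assumes SA: "trace_self_adjoint T"
  shows "(\<forall>W. orth_proj W \<and> T ` corner W W \<subseteq> corner W W \<longrightarrow>
      (\<forall>X\<in>{A + B | A B. A \<in> corner W (perp W) \<and> B \<in> corner (perp W) W}. T X = 0)) \<longleftrightarrow>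
    (\<forall>W Y. orth_proj W \<longrightarrow> W \<in> commutant Rs \<longrightarrow> T (W ** Y ** perp W) = 0)"
  unfolding vanishes_on_off_corners_iff
proof (intro iffI allI impI conjI)
  fix W Y
  assume "\<forall>W. orth_proj W \<and> T ` corner W W \<subseteq> corner W W \<longrightarrow>
    (\<forall>Y. T (W ** Y ** perp W) = 0 \<and> T (perp W ** Y ** W) = 0)"
    and "orth_proj W" "W \<in> commutant Rs"
  then show "T (W ** Y ** perp W) = 0" using commutant_invariant_corner by blast
next
  fix W Y
  assume off: "\<forall>W Y. orth_proj W \<longrightarrow> W \<in> commutant Rs \<longrightarrow> T (W ** Y ** perp W) = 0"
    and W: "orth_proj W \<and> T ` corner W W \<subseteq> corner W W"
  then have "W \<in> commutant Rs" using invariant_corner_commutant[OF SA] by blast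
  with W off show "T (W ** Y ** perp W) = 0" by blast
  from off have "T (perp W ** Y ** perp (perp W)) = 0"
    using W \<open>W \<in> commutant Rs\<close> orth_proj_perp perp_commutant by blast
  then show "T (perp W ** Y ** W) = 0" by simp
qed

end

theorem mainTheorem4:
  fixes T :: "complex^'n^'n \<Rightarrow> complex^'n^'n"
  assumes "completely_positive T"
    and "trace_self_adjoint T"
  shows "completely_reducible T \<longleftrightarrow>
    (\<forall>W. orth_proj W \<and> T ` corner W W \<subseteq> corner W W \<longrightarrow>
       (\<forall>X \<in> {A + B | A B. A \<in> corner W (perp W) \<and> B \<in> corner (perp W) W}. T X = 0))"
proof -
  obtain Rs where "\<And>X. T X = (\<Sum>R\<leftarrow>Rs. R ** X ** cadj R)"
    using assms(1) unfolding completely_positive_def by blast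
  then interpret kraus_map T Rs by unfold_locales
  have "(\<exists>Ws. irreducible_decomposition T Rs Ws) \<longleftrightarrow>
      (\<forall>W Y. orth_proj W \<longrightarrow> W \<in> commutant Rs \<longrightarrow> T (W ** Y ** perp W) = 0)"
    using irreducible_decomposition.off_diagonal_vanishes
      irreducible_decomposition_of_off_diagonal_vanishes[OF assms(2)] by blast
  then show ?thesis
    unfolding completely_reducible_iff[OF assms(2)] off_corners_vanish_iff[OF assms(2)] .
qed

end
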